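(* For $a,b\in\mathbb{C}\setminus\{0\}$ let $$f_{a,b}(z)=\frac{z^3+az^2+b}{-\overline{b}z^3-\overline{a}z+1}.$$ If $c,d\in\mathbb{R}\setminus\{0\}$, then $f_{c,di}$ is conjugate, via a conformal map of $\mathbb{C}_\infty$ that is either orientation preserving or orientation reversing, to a map $f_{a,bi}$ of the same form with $a,b\in\mathbb{R}$, $a\ge0$ and $b\ge0$. *)

theory Defs
  imports "HOL-Analysis.Analysis"
begin

text \<open>The rational map f_{a,b}(z) = (z^3 + a z^2 + b) / (- conj b z^3 - conj a z + 1),
  written as a function on the finite plane (values at poles are irrelevant, see below).\<close>
definition fab :: "complex \<Rightarrow> complex \<Rightarrow> complex \<Rightarrow> complex" where
  "fab a b z = (z^3 + a * z^2 + b) / (- cnj b * z^3 - cnj a * z + 1)"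

text \<open>Conformal automorphisms of the Riemann sphere: orientation preserving ones are
  Moebius transformations, orientation reversing ones are Moebius transformations
  composed with complex conjugation.\<close>
definition sphere_conformal :: "(complex \<Rightarrow> complex) \<Rightarrow> bool" where
  "sphere_conformal \<phi> \<longleftrightarrow>
     (\<exists>\<alpha> \<beta> \<gamma> \<delta>. \<alpha> * \<delta> - \<beta> * \<gamma> \<noteq> 0 \<and>
        (\<phi> = moebius \<alpha> \<beta> \<gamma> \<delta> \<or> \<phi> = (\<lambda>z. moebius \<alpha> \<beta> \<gamma> \<delta> (cnj z))))"

text \<open>Conjugacy of two (anti)rational maps on the sphere, expressed as
  equality of phi o f and g o phi away from a finite set of points (equivalent,
  for rational maps, to equality as maps of the Riemann sphere).\<close>
definition conj_via :: "(complex \<Rightarrow> complex) \<Rightarrow> (complex \<Rightarrow> complex) \<Rightarrow> (complex \<Rightarrow> complex) \<Rightarrow> bool" where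
  "conj_via \<phi> f g \<longleftrightarrow> (\<exists>S. finite S \<and> (\<forall>z. z \<notin> S \<longrightarrow> \<phi> (f z) = g (\<phi> z)))"

end

theory Submission
  imports Defs
begin

text \<open>The reflections z \<mapsto> -z and z \<mapsto> conj z conjugate f_{a,b} to f_{-a,-b} and
  f_{conj a, conj b}. For real c and d the first flips the signs of c and d together,
  the second flips the sign of d alone, so one of z \<mapsto> \<plusminus>z, z \<mapsto> \<plusminus>conj z makes both
  parameters positive.\<close>

lemma minus_fab: "- fab a b z = fab (- a) (- b) (- z)"
  unfolding fab_def by (simp add: power3_eq_cube power2_eq_square minus_divide_left)

lemma cnj_fab: "cnj (fab a b z) = fab (cnj a) (cnj b) (cnj z)"
  unfolding fab_def by (simp add: power3_eq_cube power2_eq_square)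

lemma sphere_conformal_scale:
  assumes "k \<noteq> 0"
  shows "sphere_conformal (\<lambda>z. k * z)" and "sphere_conformal (\<lambda>z. k * cnj z)"
proof -
  have "moebius k 0 0 1 = (\<lambda>z. k * z)" by (auto simp: moebius_def)
  then show "sphere_conformal (\<lambda>z. k * z)" "sphere_conformal (\<lambda>z. k * cnj z)"
    using assms unfolding sphere_conformal_def by (metis mult_zero_right diff_zero mult_1_right)+
qed

lemma conj_via_if_commute:
  assumes "\<And>z. \<phi> (f z) = g (\<phi> z)"
  shows "conj_via \<phi> f g"
  unfolding conj_via_def using assms by blast

theorem mainTheorem7:
  fixes c d :: real
  assumes "c \<noteq> 0" and "d \<noteq> 0"
  shows "\<exists>a b :: real. a \<ge> 0 \<and> b \<ge> 0 \<and> a \<noteq> 0 \<and> b \<noteq> 0 \<and>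
           (\<exists>\<phi>. sphere_conformal \<phi> \<and>
                 conj_via \<phi> (fab (complex_of_real c) (complex_of_real d * \<i>))
                            (fab (complex_of_real a) (complex_of_real b * \<i>)))"
proof -
  let ?f = "fab (complex_of_real c) (complex_of_real d * \<i>)"
  define s :: complex where "s = (if c > 0 then 1 else -1)"
  have s: "s \<noteq> 0" "s * complex_of_real c = complex_of_real \<bar>c\<bar>"
    using assms by (auto simp: s_def)
  have s_real: "cnj s = s" by (simp add: s_def)
  have reflect: "s * ?f z = fab (complex_of_real \<bar>c\<bar>) (s * complex_of_real d * \<i>) (s * z)" for z
    using minus_fab[of "complex_of_real c" "complex_of_real d * \<i>" z] s
    by (cases "c > 0") (auto simp: s_def)
  show ?thesis
  proof (cases "s * complex_of_real d = complex_of_real \<bar>d\<bar>")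
    case True
    then have "conj_via (\<lambda>z. s * z) ?f (fab \<bar>c\<bar> (\<bar>d\<bar> * \<i>))"
      by (intro conj_via_if_commute) (simp add: reflect)
    then show ?thesis
      using assms sphere_conformal_scale(1)[OF s(1)]
      by (intro exI[of _ "\<bar>c\<bar>"] exI[of _ "\<bar>d\<bar>"]) auto
  next
    case False
    then have d: "cnj (s * complex_of_real d * \<i>) = complex_of_real \<bar>d\<bar> * \<i>"
      using assms by (cases "c > 0"; cases "d > 0") (auto simp: s_def)
    have "conj_via (\<lambda>z. s * cnj z) ?f (fab \<bar>c\<bar> (\<bar>d\<bar> * \<i>))"
    proof (rule conj_via_if_commute)
      fix z
      have "s * cnj (?f z) = cnj (s * ?f z)" using s_real by simp
      also have "\<dots> = fab \<bar>c\<bar> (cnj (s * complex_of_real d * \<i>)) (cnj (s * z))"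
        by (simp only: reflect cnj_fab complex_cnj_complex_of_real)
      also have "\<dots> = fab \<bar>c\<bar> (\<bar>d\<bar> * \<i>) (s * cnj z)"
        by (simp only: d complex_cnj_mult[of s z] s_real)
      finally show "s * cnj (?f z) = fab \<bar>c\<bar> (\<bar>d\<bar> * \<i>) (s * cnj z)" .
    qed
    then show ?thesis
      using assms sphere_conformal_scale(2)[OF s(1)]
      by (intro exI[of _ "\<bar>c\<bar>"] exI[of _ "\<bar>d\<bar>"]) auto
  qed
qed

end
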